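(* Let $(\mathbf{x}^1,y_l^1,y_r^1),\dots,(\mathbf{x}^T,y_l^T,y_r^T)$ be a sequence of examples with $\mathbf{x}^t\in\mathbb{R}^d$ and integers $1\le y_l^t\le y_r^t\le K$, and run PA-II with parameter $C>0$ starting from $\mathbf{w}^1=\mathbf{0}$, $\boldsymbol\theta^1=\mathbf{0}$. Let $\mathbf{v}^*=(\mathbf{u}^*,\mathbf{b}^* )$, $\mathbf{u}^*\in\mathbb{R}^d$, $\mathbf{b}^*\in\mathbb{R}^{K-1}$, be an ideal predictor: $\mathbf{u}^*\cdot\mathbf{x}^t-b_i^*\ge1$ for all $i\in\{1,\dots,y_l^t-1\}$, $t\in[T]$, and $\mathbf{u}^*\cdot\mathbf{x}^t-b_i^*\le-1$ for all $i\in\{y_r^t,\dots,K-1\}$, $t\in[T]$. Let $c=\min_{t\in[T]}(y_r^t-y_l^t)$ and $R^2=\max_{t\in[T]}\Vert\mathbf{x}^t\Vert^2$. Then $$\sum_{t=1}^T\sum_{i=1}^{K-1}(l_i^t)^2\le\left(1+\frac{1}{2C}+R^2(K-c-1)\right)\Vert\mathbf{v}^*\Vert^2,$$ where $\Vert\mathbf{v}^*\Vert^2=\Vert\mathbf{u}^*\Vert^2+\Vert\mathbf{b}^*\Vert^2$.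
   Context: PA-II algorithm with parameter $C>0$: at trial $t$, with $I_t=\{1,\dots,y_l^t-1\}\cup\{y_r^t,\dots,K-1\}$, $(\mathbf{w}^{t+1},\boldsymbol\theta^{t+1})$ is the $(\mathbf{w},\boldsymbol\theta)$-part of the minimizer over $\mathbf{w},\boldsymbol\theta,(\xi_i)_{i\in I_t}$ of $\tfrac12\Vert\mathbf{w}-\mathbf{w}^t\Vert^2+\tfrac12\Vert\boldsymbol\theta-\boldsymbol\theta^t\Vert^2+C\sum_{i\in I_t}\xi_i^2$ subject to $\mathbf{w}\cdot\mathbf{x}^t-\theta_i\ge1-\xi_i$ ($i\le y_l^t-1$) and $\mathbf{w}\cdot\mathbf{x}^t-\theta_i\le-1+\xi_i$ ($i\ge y_r^t$). Losses: $l_i^t=\max(0,1+\theta_i^t-\mathbf{w}^t\cdot\mathbf{x}^t)$ for $1\le i\le y_l^t-1$, $l_i^t=\max(0,1+\mathbf{w}^t\cdot\mathbf{x}^t-\theta_i^t)$ for $y_r^t\le i\le K-1$, $l_i^t=0$ otherwise. *)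

theory Defs
  imports "HOL-Analysis.Analysis"
begin

text \<open>Thresholds are represented as functions nat => real, meaningful on the
index set {1..K-1}; PA-II iterates keep them zero outside that set.\<close>

definition Iset :: "nat \<Rightarrow> nat \<Rightarrow> nat \<Rightarrow> nat set" where
  "Iset K yl yr = {1..yl - 1} \<union> {yr..K - 1}"

definition pa2_feasible ::
  "nat \<Rightarrow> 'a::euclidean_space \<Rightarrow> nat \<Rightarrow> nat \<Rightarrow> 'a \<Rightarrow> (nat \<Rightarrow> real) \<Rightarrow> (nat \<Rightarrow> real) \<Rightarrow> bool" where
  "pa2_feasible K x yl yr w \<theta> \<xi> \<longleftrightarrow>
     (\<forall>i. i \<notin> {1..K - 1} \<longrightarrow> \<theta> i = 0) \<and>
     (\<forall>i\<in>{1..yl - 1}. w \<bullet> x - \<theta> i \<ge> 1 - \<xi> i) \<and>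
     (\<forall>i\<in>{yr..K - 1}. w \<bullet> x - \<theta> i \<le> -1 + \<xi> i)"

definition pa2_obj ::
  "real \<Rightarrow> nat \<Rightarrow> nat \<Rightarrow> nat \<Rightarrow> 'a::euclidean_space \<Rightarrow> (nat \<Rightarrow> real) \<Rightarrow> 'a \<Rightarrow> (nat \<Rightarrow> real) \<Rightarrow> (nat \<Rightarrow> real) \<Rightarrow> real" where
  "pa2_obj C K yl yr w0 \<theta>0 w \<theta> \<xi> =
     (1/2) * (norm (w - w0))\<^sup>2 + (1/2) * (\<Sum>i=1..K - 1. (\<theta> i - \<theta>0 i)\<^sup>2)
     + C * (\<Sum>i\<in>Iset K yl yr. (\<xi> i)\<^sup>2)"

definition pa2_is_min ::
  "real \<Rightarrow> nat \<Rightarrow> 'a::euclidean_space \<Rightarrow> nat \<Rightarrow> nat \<Rightarrow> 'a \<Rightarrow> (nat \<Rightarrow> real) \<Rightarrow> 'a \<Rightarrow> (nat \<Rightarrow> real) \<Rightarrow> (nat \<Rightarrow> real) \<Rightarrow> bool" where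
  "pa2_is_min C K x yl yr w0 \<theta>0 w \<theta> \<xi> \<longleftrightarrow>
     pa2_feasible K x yl yr w \<theta> \<xi> \<and>
     (\<forall>w' \<theta>' \<xi>'. pa2_feasible K x yl yr w' \<theta>' \<xi>' \<longrightarrow>
        pa2_obj C K yl yr w0 \<theta>0 w \<theta> \<xi> \<le> pa2_obj C K yl yr w0 \<theta>0 w' \<theta>' \<xi>')"

text \<open>One PA-II update: the (w, theta)-part of the (unique) minimizer.\<close>
definition pa2_step ::
  "real \<Rightarrow> nat \<Rightarrow> 'a::euclidean_space \<Rightarrow> nat \<Rightarrow> nat \<Rightarrow> 'a \<times> (nat \<Rightarrow> real) \<Rightarrow> 'a \<times> (nat \<Rightarrow> real)" where
  "pa2_step C K x yl yr s =
     (THE p. \<exists>\<xi>. pa2_is_min C K x yl yr (fst s) (snd s) (fst p) (snd p) \<xi>)"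

text \<open>pa2_state C K x yl yr n = (w^(n+1), theta^(n+1)), i.e. the state before trial n+1.\<close>
primrec pa2_state ::
  "real \<Rightarrow> nat \<Rightarrow> (nat \<Rightarrow> 'a::euclidean_space) \<Rightarrow> (nat \<Rightarrow> nat) \<Rightarrow> (nat \<Rightarrow> nat) \<Rightarrow> nat \<Rightarrow> 'a \<times> (nat \<Rightarrow> real)" where
  "pa2_state C K x yl yr 0 = (0, (\<lambda>_. 0))"
| "pa2_state C K x yl yr (Suc n) =
     pa2_step C K (x (Suc n)) (yl (Suc n)) (yr (Suc n)) (pa2_state C K x yl yr n)"

definition pa_loss :: "nat \<Rightarrow> 'a::euclidean_space \<Rightarrow> nat \<Rightarrow> nat \<Rightarrow> 'a \<Rightarrow> (nat \<Rightarrow> real) \<Rightarrow> nat \<Rightarrow> real" where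
  "pa_loss K x yl yr w \<theta> i =
     (if 1 \<le> i \<and> i \<le> yl - 1 then max 0 (1 + \<theta> i - w \<bullet> x)
      else if yr \<le> i \<and> i \<le> K - 1 then max 0 (1 + w \<bullet> x - \<theta> i)
      else 0)"

end

theory Submission
  imports Defs
begin

text \<open>Write v = (w, theta), let v* = (u, b) be the ideal predictor and obj_t the optimal value of
the PA-II problem at trial t. The ideal predictor is feasible with zero slack, and the objective is
strongly convex, so comparing it with the minimiser gives
  2 obj_t <= |v* - v_t|^2 - |v* - v_(t+1)|^2.
Feasibility of the minimiser bounds each active loss by
  |xi_i| + |(w_(t+1) - w_t) . x_t| + |theta_i^(t+1) - theta_i^t|,
and Cauchy-Schwarz with weights 1/(2C), |I_t| |x_t|^2 and 1 turns the squared losses of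
trial t into at most (1 + 1/(2C) + |I_t| |x_t|^2) 2 obj_t. Telescoping, with |I_t| <= K - c - 1
and |x_t|^2 <= R^2, gives the bound. The minimiser is written down from the KKT conditions: all
multipliers are determined by the scalar w . x, a fixed point of a continuous decreasing map.\<close>

lemma sq_add_le_weighted:
  fixes a b \<alpha> \<beta> :: real
  assumes "0 \<le> \<alpha>" "0 \<le> \<beta>" "\<alpha> = 0 \<Longrightarrow> a = 0" "\<beta> = 0 \<Longrightarrow> b = 0"
  shows "(a + b)\<^sup>2 \<le> (\<alpha> + \<beta>) * (a\<^sup>2 / \<alpha> + b\<^sup>2 / \<beta>)"
proof (cases "\<alpha> = 0 \<or> \<beta> = 0")
  case False
  then have "(\<alpha> + \<beta>) * (a\<^sup>2 / \<alpha> + b\<^sup>2 / \<beta>) - (a + b)\<^sup>2 = (\<beta> * a - \<alpha> * b)\<^sup>2 / (\<alpha> * \<beta>)"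
    by (simp add: field_simps power2_eq_square)
  moreover have "0 \<le> (\<beta> * a - \<alpha> * b)\<^sup>2 / (\<alpha> * \<beta>)" using assms by simp
  ultimately show ?thesis by linarith
qed (use assms in auto)

lemma sq_add3_le_weighted:
  fixes a b c \<alpha> \<beta> \<gamma> :: real
  assumes "0 \<le> \<alpha>" "0 \<le> \<beta>" "0 \<le> \<gamma>"
    and "\<alpha> = 0 \<Longrightarrow> a = 0" "\<beta> = 0 \<Longrightarrow> b = 0" "\<gamma> = 0 \<Longrightarrow> c = 0"
  shows "(a + b + c)\<^sup>2 \<le> (\<alpha> + \<beta> + \<gamma>) * (a\<^sup>2 / \<alpha> + b\<^sup>2 / \<beta> + c\<^sup>2 / \<gamma>)"
proof -
  have ab: "(a + b)\<^sup>2 / (\<alpha> + \<beta>) \<le> a\<^sup>2 / \<alpha> + b\<^sup>2 / \<beta>"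
    using sq_add_le_weighted[of \<alpha> \<beta> a b] assms
    by (cases "\<alpha> + \<beta> = 0") (auto simp: divide_le_eq mult.commute)
  have "(a + b + c)\<^sup>2 \<le> (\<alpha> + \<beta> + \<gamma>) * ((a + b)\<^sup>2 / (\<alpha> + \<beta>) + c\<^sup>2 / \<gamma>)"
    using assms by (intro sq_add_le_weighted) auto
  also have "\<dots> \<le> (\<alpha> + \<beta> + \<gamma>) * (a\<^sup>2 / \<alpha> + b\<^sup>2 / \<beta> + c\<^sup>2 / \<gamma>)"
    using ab assms by (intro mult_left_mono) auto
  finally show ?thesis .
qed

lemma antimono_has_fixed_point:
  fixes f :: "real \<Rightarrow> real"
  assumes "continuous_on UNIV f" "antimono f"
  shows "\<exists>m. f m = m"
proof -
  define a b where "a = min 0 (f 0)" and "b = max 0 (f 0)"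
  have "a - f a \<le> 0" "0 \<le> b - f b"
    using antimonoD[OF assms(2), of a 0] antimonoD[OF assms(2), of 0 b] by (auto simp: a_def b_def)
  moreover have "continuous_on {a..b} (\<lambda>m. m - f m)"
    using assms(1) by (intro continuous_intros) (auto intro: continuous_on_subset)
  ultimately have "\<exists>m\<ge>a. m \<le> b \<and> m - f m = 0"
    by (intro IVT') (auto simp: a_def b_def)
  then show ?thesis by (metis eq_iff_diff_eq_0)
qed

definition pa_sign :: "nat \<Rightarrow> nat \<Rightarrow> real" where
  "pa_sign yl i = (if i < yl then 1 else -1)"

lemma pa_sign_sq [simp]: "pa_sign yl i * pa_sign yl i = 1"
  by (simp add: pa_sign_def)

lemma Iset_subset:
  "1 \<le> yl \<Longrightarrow> yl \<le> yr \<Longrightarrow> yr \<le> K \<Longrightarrow> Iset K yl yr \<subseteq> {1..K - 1}"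
  by (auto simp: Iset_def)

lemma finite_Iset [simp]: "finite (Iset K yl yr)"
  by (simp add: Iset_def)

lemma card_Iset:
  assumes "1 \<le> yl" "yl \<le> yr" "yr \<le> K"
  shows "real (card (Iset K yl yr)) = real K - 1 - real (yr - yl)"
proof -
  have "card (Iset K yl yr) = card {1..yl - 1} + card {yr..K - 1}"
    unfolding Iset_def using assms by (intro card_Un_disjoint) auto
  then show ?thesis using assms by simp
qed

lemma card_Iset_mult_sq_norm_le:
  fixes x :: "nat \<Rightarrow> 'a::real_normed_vector"
  assumes "finite S" "t \<in> S" and "1 \<le> yl t" "yl t \<le> yr t" "yr t \<le> K"
  shows "real (card (Iset K (yl t) (yr t))) * (norm (x t))\<^sup>2
    \<le> Max ((\<lambda>t. (norm (x t))\<^sup>2) ` S) * (real K - real (Min ((\<lambda>t. yr t - yl t) ` S)) - 1)"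
proof -
  have "Min ((\<lambda>t. yr t - yl t) ` S) \<le> yr t - yl t" "(norm (x t))\<^sup>2 \<le> Max ((\<lambda>t. (norm (x t))\<^sup>2) ` S)"
    using assms(1,2) by (auto intro: Min_le Max_ge)
  moreover have "real (card (Iset K (yl t) (yr t))) = real K - 1 - real (yr t - yl t)"
    using card_Iset assms(3-5) by blast
  ultimately show ?thesis
    by (subst mult.commute) (intro mult_mono, auto)
qed

lemma pa2_feasible_iff_margin:
  assumes "1 \<le> yl" "yl \<le> yr"
  shows "pa2_feasible K x yl yr w \<theta> \<xi> \<longleftrightarrow>
    (\<forall>i. i \<notin> {1..K - 1} \<longrightarrow> \<theta> i = 0) \<and>
    (\<forall>i\<in>Iset K yl yr. 1 \<le> pa_sign yl i * (w \<bullet> x - \<theta> i) + \<xi> i)"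
proof -
  have "(\<forall>i\<in>{1..yl - 1}. 1 - \<xi> i \<le> w \<bullet> x - \<theta> i) \<longleftrightarrow>
        (\<forall>i\<in>{1..yl - 1}. 1 \<le> pa_sign yl i * (w \<bullet> x - \<theta> i) + \<xi> i)"
    by (intro ball_cong) (auto simp: pa_sign_def)
  moreover have "(\<forall>i\<in>{yr..K - 1}. w \<bullet> x - \<theta> i \<le> -1 + \<xi> i) \<longleftrightarrow>
        (\<forall>i\<in>{yr..K - 1}. 1 \<le> pa_sign yl i * (w \<bullet> x - \<theta> i) + \<xi> i)"
    using assms by (intro ball_cong) (auto simp: pa_sign_def)
  ultimately show ?thesis
    unfolding pa2_feasible_def Iset_def ball_Un by blast
qed

lemma pa_loss_eq_0: "i \<notin> Iset K yl yr \<Longrightarrow> pa_loss K x yl yr w \<theta> i = 0"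
  by (auto simp: pa_loss_def Iset_def)

lemma pa_loss_le_slack:
  assumes "pa2_feasible K x yl yr w \<theta> \<xi>"
  shows "pa_loss K x yl yr w0 \<theta>0 i \<le> \<bar>\<xi> i\<bar> + \<bar>(w - w0) \<bullet> x\<bar> + \<bar>\<theta> i - \<theta>0 i\<bar>"
proof -
  have "(w - w0) \<bullet> x = w \<bullet> x - w0 \<bullet> x" by (simp add: inner_diff_left)
  moreover have "1 \<le> i \<and> i \<le> yl - 1 \<Longrightarrow> 1 - \<xi> i \<le> w \<bullet> x - \<theta> i"
    and "yr \<le> i \<and> i \<le> K - 1 \<Longrightarrow> w \<bullet> x - \<theta> i \<le> -1 + \<xi> i"
    using assms by (auto simp: pa2_feasible_def)
  ultimately show ?thesis
    unfolding pa_loss_def by (auto simp: abs_if)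
qed

lemma pa_loss_sq_sum_le_obj:
  assumes C: "0 < C" and lab: "1 \<le> yl" "yl \<le> yr" "yr \<le> K"
    and feas: "pa2_feasible K x yl yr w \<theta> \<xi>"
  shows "(\<Sum>i=1..K - 1. (pa_loss K x yl yr w0 \<theta>0 i)\<^sup>2)
    \<le> (1 + 1 / (2 * C) + real (card (Iset K yl yr)) * (norm x)\<^sup>2)
          * (2 * pa2_obj C K yl yr w0 \<theta>0 w \<theta> \<xi>)"
proof -
  define I where "I = Iset K yl yr"
  define n where "n = real (card I)"
  define \<alpha> where "\<alpha> = 1 / (2 * C)"
  define \<beta> where "\<beta> = n * (norm x)\<^sup>2"
  define p where "p = (w - w0) \<bullet> x"
  have I_sub: "I \<subseteq> {1..K - 1}" unfolding I_def using Iset_subset lab .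
  have "\<bar>p\<bar> \<le> norm (w - w0) * norm x" unfolding p_def by (rule Cauchy_Schwarz_ineq2)
  then have p_sq: "p\<^sup>2 \<le> (norm (w - w0))\<^sup>2 * (norm x)\<^sup>2"
    by (metis abs_ge_zero power2_abs power_mono power_mult_distrib)
  have p_term: "n * (p\<^sup>2 / \<beta>) \<le> (norm (w - w0))\<^sup>2"
  proof (cases "n = 0 \<or> x = 0")
    case False
    then have "n * (p\<^sup>2 / \<beta>) = p\<^sup>2 / (norm x)\<^sup>2" by (simp add: \<beta>_def)
    with False p_sq show ?thesis by (simp add: divide_le_eq)
  qed (auto simp: \<beta>_def)
  have pointwise: "(pa_loss K x yl yr w0 \<theta>0 i)\<^sup>2
      \<le> (\<alpha> + \<beta> + 1) * ((\<xi> i)\<^sup>2 / \<alpha> + p\<^sup>2 / \<beta> + (\<theta> i - \<theta>0 i)\<^sup>2 / 1)" if "i \<in> I" for i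
  proof -
    have "n > 0" using that unfolding n_def I_def by (auto simp: card_gt_0_iff)
    then have "\<beta> = 0 \<Longrightarrow> \<bar>p\<bar> = 0" by (simp add: \<beta>_def p_def)
    then have "(\<bar>\<xi> i\<bar> + \<bar>p\<bar> + \<bar>\<theta> i - \<theta>0 i\<bar>)\<^sup>2
        \<le> (\<alpha> + \<beta> + 1) * (\<bar>\<xi> i\<bar>\<^sup>2 / \<alpha> + \<bar>p\<bar>\<^sup>2 / \<beta> + \<bar>\<theta> i - \<theta>0 i\<bar>\<^sup>2 / 1)"
      using C \<open>n > 0\<close> by (intro sq_add3_le_weighted) (auto simp: \<alpha>_def \<beta>_def)
    moreover have "(pa_loss K x yl yr w0 \<theta>0 i)\<^sup>2 \<le> (\<bar>\<xi> i\<bar> + \<bar>p\<bar> + \<bar>\<theta> i - \<theta>0 i\<bar>)\<^sup>2"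
      using pa_loss_le_slack[OF feas, of w0 \<theta>0 i]
      by (intro power_mono) (auto simp: p_def pa_loss_def)
    ultimately show ?thesis by simp
  qed
  have "(\<Sum>i=1..K - 1. (pa_loss K x yl yr w0 \<theta>0 i)\<^sup>2) = (\<Sum>i\<in>I. (pa_loss K x yl yr w0 \<theta>0 i)\<^sup>2)"
    using I_sub by (intro sum.mono_neutral_right) (auto simp: I_def pa_loss_eq_0)
  also have "\<dots> \<le> (\<Sum>i\<in>I. (\<alpha> + \<beta> + 1) * ((\<xi> i)\<^sup>2 / \<alpha> + p\<^sup>2 / \<beta> + (\<theta> i - \<theta>0 i)\<^sup>2 / 1))"
    using pointwise by (rule sum_mono)
  also have "\<dots> = (\<alpha> + \<beta> + 1)
      * (2 * C * (\<Sum>i\<in>I. (\<xi> i)\<^sup>2) + n * (p\<^sup>2 / \<beta>) + (\<Sum>i\<in>I. (\<theta> i - \<theta>0 i)\<^sup>2))"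
    unfolding sum_distrib_left[symmetric] sum.distrib sum_divide_distrib[symmetric]
    by (simp add: \<alpha>_def n_def)
  also have "\<dots> \<le> (\<alpha> + \<beta> + 1)
      * (2 * C * (\<Sum>i\<in>I. (\<xi> i)\<^sup>2) + (norm (w - w0))\<^sup>2 + (\<Sum>i=1..K - 1. (\<theta> i - \<theta>0 i)\<^sup>2))"
    using p_term sum_mono2[OF _ I_sub, of "\<lambda>i. (\<theta> i - \<theta>0 i)\<^sup>2"] C
    by (intro mult_left_mono add_mono) (auto simp: \<alpha>_def \<beta>_def n_def)
  also have "\<dots> = (1 + \<alpha> + \<beta>) * (2 * pa2_obj C K yl yr w0 \<theta>0 w \<theta> \<xi>)"
    using C by (simp add: pa2_obj_def I_def \<alpha>_def field_simps norm_minus_commute)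
  finally show ?thesis by (simp add: \<alpha>_def \<beta>_def n_def I_def)
qed

definition pa_sqdist :: "nat \<Rightarrow> 'a::real_inner \<Rightarrow> (nat \<Rightarrow> real) \<Rightarrow> 'a \<Rightarrow> (nat \<Rightarrow> real) \<Rightarrow> real" where
  "pa_sqdist K w \<theta> w' \<theta>' = (norm (w - w'))\<^sup>2 + (\<Sum>i=1..K - 1. (\<theta> i - \<theta>' i)\<^sup>2)"

lemma pa_sqdist_nonneg: "0 \<le> pa_sqdist K w \<theta> w' \<theta>'"
  unfolding pa_sqdist_def by (intro add_nonneg_nonneg sum_nonneg) auto

lemma pa_sqdist_eq_0_iff:
  "pa_sqdist K w \<theta> w' \<theta>' = 0 \<longleftrightarrow> w = w' \<and> (\<forall>i\<in>{1..K - 1}. \<theta> i = \<theta>' i)"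
  unfolding pa_sqdist_def by (simp add: add_nonneg_eq_0_iff sum_nonneg sum_nonneg_eq_0_iff)

lemma pa2_obj_eq_sqdist:
  "pa2_obj C K yl yr w0 \<theta>0 w \<theta> \<xi> = pa_sqdist K w \<theta> w0 \<theta>0 / 2 + C * (\<Sum>i\<in>Iset K yl yr. (\<xi> i)\<^sup>2)"
  by (simp add: pa2_obj_def pa_sqdist_def)

lemma pa2_obj_nonneg: "0 < C \<Longrightarrow> 0 \<le> pa2_obj C K yl yr w0 \<theta>0 w \<theta> \<xi>"
  unfolding pa2_obj_eq_sqdist using pa_sqdist_nonneg
  by (intro add_nonneg_nonneg mult_nonneg_nonneg sum_nonneg) auto

lemma pa_sqdist_expand:
  "pa_sqdist K w' \<theta>' w0 \<theta>0 = pa_sqdist K w \<theta> w0 \<theta>0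
     + 2 * ((w - w0) \<bullet> (w' - w) + (\<Sum>i=1..K - 1. (\<theta> i - \<theta>0 i) * (\<theta>' i - \<theta> i)))
     + pa_sqdist K w' \<theta>' w \<theta>"
proof -
  have "(norm (w' - w0))\<^sup>2 = (norm (w - w0))\<^sup>2 + 2 * ((w - w0) \<bullet> (w' - w)) + (norm (w' - w))\<^sup>2"
    by (simp add: power2_norm_eq_inner inner_diff_left inner_diff_right inner_commute algebra_simps)
  moreover have "(\<theta>' i - \<theta>0 i)\<^sup>2
      = (\<theta> i - \<theta>0 i)\<^sup>2 + 2 * ((\<theta> i - \<theta>0 i) * (\<theta>' i - \<theta> i)) + (\<theta>' i - \<theta> i)\<^sup>2" for i
    by (simp add: power2_eq_square algebra_simps)
  then have "(\<Sum>i=1..K - 1. (\<theta>' i - \<theta>0 i)\<^sup>2) = (\<Sum>i=1..K - 1. (\<theta> i - \<theta>0 i)\<^sup>2)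
      + 2 * (\<Sum>i=1..K - 1. (\<theta> i - \<theta>0 i) * (\<theta>' i - \<theta> i)) + (\<Sum>i=1..K - 1. (\<theta>' i - \<theta> i)\<^sup>2)"
    by (simp only: sum.distrib sum_distrib_left)
  ultimately show ?thesis
    unfolding pa_sqdist_def by (smt (verit))
qed

lemma pa2_obj_expansion:
  "pa2_obj C K yl yr w0 \<theta>0 w' \<theta>' \<xi>' = pa2_obj C K yl yr w0 \<theta>0 w \<theta> \<xi>
     + ((w - w0) \<bullet> (w' - w) + (\<Sum>i=1..K - 1. (\<theta> i - \<theta>0 i) * (\<theta>' i - \<theta> i))
        + 2 * C * (\<Sum>i\<in>Iset K yl yr. \<xi> i * (\<xi>' i - \<xi> i)))
     + pa_sqdist K w' \<theta>' w \<theta> / 2 + C * (\<Sum>i\<in>Iset K yl yr. (\<xi>' i - \<xi> i)\<^sup>2)"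
proof -
  have "(\<xi>' i)\<^sup>2 = (\<xi> i)\<^sup>2 + 2 * (\<xi> i * (\<xi>' i - \<xi> i)) + (\<xi>' i - \<xi> i)\<^sup>2" for i
    by (simp add: power2_eq_square algebra_simps)
  then have "(\<Sum>i\<in>Iset K yl yr. (\<xi>' i)\<^sup>2) = (\<Sum>i\<in>Iset K yl yr. (\<xi> i)\<^sup>2)
      + 2 * (\<Sum>i\<in>Iset K yl yr. \<xi> i * (\<xi>' i - \<xi> i)) + (\<Sum>i\<in>Iset K yl yr. (\<xi>' i - \<xi> i)\<^sup>2)"
    by (simp only: sum.distrib sum_distrib_left)
  then show ?thesis
    unfolding pa2_obj_eq_sqdist pa_sqdist_expand[of K w' \<theta>' w0 \<theta>0 w \<theta>]
    by (simp add: distrib_left mult.assoc)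
qed

definition pa2_strong_min ::
  "real \<Rightarrow> nat \<Rightarrow> 'a::euclidean_space \<Rightarrow> nat \<Rightarrow> nat \<Rightarrow> 'a \<Rightarrow> (nat \<Rightarrow> real) \<Rightarrow> 'a \<Rightarrow> (nat \<Rightarrow> real) \<Rightarrow> (nat \<Rightarrow> real) \<Rightarrow> bool" where
  "pa2_strong_min C K x yl yr w0 \<theta>0 w \<theta> \<xi> \<longleftrightarrow>
     pa2_feasible K x yl yr w \<theta> \<xi> \<and>
     (\<forall>w' \<theta>' \<xi>'. pa2_feasible K x yl yr w' \<theta>' \<xi>' \<longrightarrow>
        pa2_obj C K yl yr w0 \<theta>0 w \<theta> \<xi> + pa_sqdist K w' \<theta>' w \<theta> / 2
          + C * (\<Sum>i\<in>Iset K yl yr. (\<xi>' i - \<xi> i)\<^sup>2)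
        \<le> pa2_obj C K yl yr w0 \<theta>0 w' \<theta>' \<xi>')"

lemma pa2_strong_min_if_KKT:
  fixes \<tau> :: "nat \<Rightarrow> real"
  assumes C: "0 < C" and lab: "1 \<le> yl" "yl \<le> yr" "yr \<le> K"
    and feas: "pa2_feasible K x yl yr w \<theta> \<xi>"
    and \<tau>_nonneg: "\<forall>i\<in>Iset K yl yr. 0 \<le> \<tau> i"
    and slack: "\<forall>i\<in>Iset K yl yr. \<tau> i \<noteq> 0 \<longrightarrow> pa_sign yl i * (w \<bullet> x - \<theta> i) + \<xi> i = 1"
    and w: "w = w0 + (\<Sum>i\<in>Iset K yl yr. pa_sign yl i * \<tau> i) *\<^sub>R x"
    and \<theta>: "\<forall>i\<in>{1..K - 1}. \<theta> i = \<theta>0 i - (if i \<in> Iset K yl yr then pa_sign yl i * \<tau> i else 0)"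
    and \<xi>: "\<forall>i\<in>Iset K yl yr. 2 * C * \<xi> i = \<tau> i"
  shows "pa2_strong_min C K x yl yr w0 \<theta>0 w \<theta> \<xi>"
  unfolding pa2_strong_min_def
proof (intro conjI allI impI feas)
  define I where "I = Iset K yl yr"
  have I_sub: "I \<subseteq> {1..K - 1}" unfolding I_def using Iset_subset lab .
  fix w' \<theta>' \<xi>'
  assume "pa2_feasible K x yl yr w' \<theta>' \<xi>'"
  then have margin': "\<forall>i\<in>I. 1 \<le> pa_sign yl i * (w' \<bullet> x - \<theta>' i) + \<xi>' i"
    unfolding pa2_feasible_iff_margin[OF lab(1,2)] I_def by blast
  have "w - w0 = (\<Sum>i\<in>I. pa_sign yl i * \<tau> i) *\<^sub>R x" using w by (simp add: I_def)
  then have "(w - w0) \<bullet> (w' - w) = (\<Sum>i\<in>I. pa_sign yl i * \<tau> i) * (w' \<bullet> x - w \<bullet> x)"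
    by (simp add: inner_diff_right inner_commute)
  then have "(w - w0) \<bullet> (w' - w) = (\<Sum>i\<in>I. \<tau> i * (pa_sign yl i * (w' \<bullet> x - w \<bullet> x)))"
    unfolding sum_distrib_right by (simp add: mult_ac)
  moreover have "(\<Sum>i=1..K - 1. (\<theta> i - \<theta>0 i) * (\<theta>' i - \<theta> i))
      = (\<Sum>i\<in>I. \<tau> i * (- pa_sign yl i * (\<theta>' i - \<theta> i)))"
    using I_sub \<theta> by (intro sum.mono_neutral_cong_right) (auto simp: I_def)
  moreover have "2 * C * (\<Sum>i\<in>I. \<xi> i * (\<xi>' i - \<xi> i)) = (\<Sum>i\<in>I. \<tau> i * (\<xi>' i - \<xi> i))"
    using \<xi> by (simp add: I_def sum_distrib_left mult.assoc[symmetric])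
  moreover have "0 \<le> (\<Sum>i\<in>I. \<tau> i * ((pa_sign yl i * (w' \<bullet> x - \<theta>' i) + \<xi>' i)
                                        - (pa_sign yl i * (w \<bullet> x - \<theta> i) + \<xi> i)))"
    using \<tau>_nonneg slack margin' by (intro sum_nonneg) (auto simp: I_def)
  ultimately have "0 \<le> (w - w0) \<bullet> (w' - w) + (\<Sum>i=1..K - 1. (\<theta> i - \<theta>0 i) * (\<theta>' i - \<theta> i))
        + 2 * C * (\<Sum>i\<in>I. \<xi> i * (\<xi>' i - \<xi> i))"
    by (simp add: sum.distrib[symmetric] algebra_simps)
  then show "pa2_obj C K yl yr w0 \<theta>0 w \<theta> \<xi> + pa_sqdist K w' \<theta>' w \<theta> / 2
      + C * (\<Sum>i\<in>Iset K yl yr. (\<xi>' i - \<xi> i)\<^sup>2) \<le> pa2_obj C K yl yr w0 \<theta>0 w' \<theta>' \<xi>'"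
    unfolding pa2_obj_expansion[of C K yl yr w0 \<theta>0 w' \<theta>' \<xi>' w \<theta> \<xi>] I_def by linarith
qed

lemma pa2_strong_min_exists:
  assumes C: "0 < C" and lab: "1 \<le> yl" "yl \<le> yr" "yr \<le> K"
  shows "\<exists>w \<theta> \<xi>. pa2_strong_min C K x yl yr w0 \<theta>0 w \<theta> \<xi>"
proof -
  define I where "I = Iset K yl yr"
  define \<mu> where "\<mu> = 1 + 1 / (2 * C)"
  \<comment> \<open>With m = w \<bullet> x, an active constraint has margin y_i (m - theta0_i) + \<mu> tau_i = 1.\<close>
  define \<tau> where "\<tau> m i = max 0 (1 - pa_sign yl i * (m - \<theta>0 i)) / \<mu>" for m i
  define \<sigma> where "\<sigma> m = (\<Sum>i\<in>I. pa_sign yl i * \<tau> m i)" for m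
  have \<mu>: "0 < \<mu>" using C by (simp add: \<mu>_def add_pos_pos)
  have "antimono \<sigma>"
    unfolding \<sigma>_def using \<mu>
    by (intro antimonoI sum_mono) (auto simp: pa_sign_def \<tau>_def divide_right_mono)
  then have "antimono (\<lambda>m. w0 \<bullet> x + (x \<bullet> x) * \<sigma> m)"
    by (intro antimonoI) (simp add: antimonoD mult_left_mono)
  moreover have "continuous_on UNIV (\<lambda>m. w0 \<bullet> x + (x \<bullet> x) * \<sigma> m)"
    unfolding \<sigma>_def \<tau>_def by (intro continuous_intros) (use \<mu> in auto)
  ultimately obtain m where m: "w0 \<bullet> x + (x \<bullet> x) * \<sigma> m = m"
    using antimono_has_fixed_point by blast
  define w where "w = w0 + \<sigma> m *\<^sub>R x"
  define \<theta> where "\<theta> i = (if i \<in> {1..K - 1} then \<theta>0 i - (if i \<in> I then pa_sign yl i * \<tau> m i else 0) else 0)" for i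
  define \<xi> where "\<xi> i = \<tau> m i / (2 * C)" for i
  have I_sub: "I \<subseteq> {1..K - 1}" unfolding I_def using Iset_subset lab .
  have wx: "w \<bullet> x = m" using m by (simp add: w_def inner_add_left mult.commute)
  have margin: "pa_sign yl i * (w \<bullet> x - \<theta> i) + \<xi> i = max 1 (pa_sign yl i * (m - \<theta>0 i))"
    if "i \<in> I" for i
  proof -
    have "pa_sign yl i * (w \<bullet> x - \<theta> i) + \<xi> i = pa_sign yl i * (m - \<theta>0 i) + \<mu> * \<tau> m i"
      using that I_sub C by (auto simp: wx \<theta>_def \<xi>_def \<mu>_def algebra_simps)
    also have "\<mu> * \<tau> m i = max 0 (1 - pa_sign yl i * (m - \<theta>0 i))"
      using \<mu> by (simp add: \<tau>_def)
    finally show ?thesis by linarith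
  qed
  have "pa2_feasible K x yl yr w \<theta> \<xi>"
    unfolding pa2_feasible_iff_margin[OF lab(1,2)] using margin by (auto simp: \<theta>_def I_def)
  moreover have "\<tau> m i \<noteq> 0 \<Longrightarrow> pa_sign yl i * (w \<bullet> x - \<theta> i) + \<xi> i = 1" if "i \<in> I" for i
    using margin[OF that] by (auto simp: \<tau>_def max_def split: if_splits)
  ultimately have "pa2_strong_min C K x yl yr w0 \<theta>0 w \<theta> \<xi>"
    using C lab \<mu> by (intro pa2_strong_min_if_KKT[where \<tau> = "\<tau> m"])
      (auto simp: I_def \<tau>_def w_def \<sigma>_def \<theta>_def \<xi>_def)
  then show ?thesis by blast
qed

lemma pa2_strong_min_imp_is_min:
  assumes "0 < C" "pa2_strong_min C K x yl yr w0 \<theta>0 w \<theta> \<xi>"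
  shows "pa2_is_min C K x yl yr w0 \<theta>0 w \<theta> \<xi>"
proof -
  have "0 \<le> pa_sqdist K w' \<theta>' w \<theta> / 2 + C * (\<Sum>i\<in>Iset K yl yr. (\<xi>' i - \<xi> i)\<^sup>2)" for w' \<theta>' \<xi>'
    using assms(1) pa_sqdist_nonneg by (intro add_nonneg_nonneg mult_nonneg_nonneg sum_nonneg) auto
  then show ?thesis
    using assms(2) unfolding pa2_is_min_def pa2_strong_min_def by (smt (verit))
qed

lemma pa2_step_eq_strong_min:
  assumes C: "0 < C" and strong: "pa2_strong_min C K x yl yr w0 \<theta>0 w \<theta> \<xi>"
  shows "pa2_step C K x yl yr (w0, \<theta>0) = (w, \<theta>)"
  unfolding pa2_step_def
proof (rule the_equality)
  show "\<exists>\<xi>. pa2_is_min C K x yl yr (fst (w0, \<theta>0)) (snd (w0, \<theta>0)) (fst (w, \<theta>)) (snd (w, \<theta>)) \<xi>"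
    using pa2_strong_min_imp_is_min[OF C strong] by auto
  fix p
  assume "\<exists>\<xi>'. pa2_is_min C K x yl yr (fst (w0, \<theta>0)) (snd (w0, \<theta>0)) (fst p) (snd p) \<xi>'"
  then obtain \<xi>' where min': "pa2_is_min C K x yl yr w0 \<theta>0 (fst p) (snd p) \<xi>'" by auto
  have feas: "pa2_feasible K x yl yr w \<theta> \<xi>" "pa2_feasible K x yl yr (fst p) (snd p) \<xi>'"
    using strong min' by (auto simp: pa2_strong_min_def pa2_is_min_def)
  have "pa2_obj C K yl yr w0 \<theta>0 (fst p) (snd p) \<xi>' \<le> pa2_obj C K yl yr w0 \<theta>0 w \<theta> \<xi>"
    using min' feas(1) unfolding pa2_is_min_def by blast
  moreover have "pa2_obj C K yl yr w0 \<theta>0 w \<theta> \<xi> + pa_sqdist K (fst p) (snd p) w \<theta> / 2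
      + C * (\<Sum>i\<in>Iset K yl yr. (\<xi>' i - \<xi> i)\<^sup>2) \<le> pa2_obj C K yl yr w0 \<theta>0 (fst p) (snd p) \<xi>'"
    using strong feas(2) unfolding pa2_strong_min_def by blast
  moreover have "0 \<le> C * (\<Sum>i\<in>Iset K yl yr. (\<xi>' i - \<xi> i)\<^sup>2)"
    using C by (intro mult_nonneg_nonneg sum_nonneg) auto
  ultimately have "pa_sqdist K (fst p) (snd p) w \<theta> \<le> 0" by linarith
  then have "fst p = w \<and> (\<forall>i\<in>{1..K - 1}. snd p i = \<theta> i)"
    using pa_sqdist_nonneg pa_sqdist_eq_0_iff by (metis order_antisym)
  moreover have "\<forall>i. i \<notin> {1..K - 1} \<longrightarrow> snd p i = \<theta> i"
    using feas by (auto simp: pa2_feasible_def)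
  ultimately show "p = (w, \<theta>)" by (metis ext prod.collapse)
qed

lemma pa2_strong_min_progress:
  assumes "0 < C" "pa2_strong_min C K x yl yr w0 \<theta>0 w \<theta> \<xi>"
    and "pa2_feasible K x yl yr u b (\<lambda>_. 0)"
  shows "2 * pa2_obj C K yl yr w0 \<theta>0 w \<theta> \<xi> \<le> pa_sqdist K u b w0 \<theta>0 - pa_sqdist K u b w \<theta>"
proof -
  have "0 \<le> C * (\<Sum>i\<in>Iset K yl yr. (0 - \<xi> i)\<^sup>2)"
    using assms(1) by (intro mult_nonneg_nonneg sum_nonneg) auto
  moreover have "pa2_obj C K yl yr w0 \<theta>0 u b (\<lambda>_. 0) = pa_sqdist K u b w0 \<theta>0 / 2"
    by (simp add: pa2_obj_eq_sqdist)
  ultimately show ?thesis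
    using assms(2,3) unfolding pa2_strong_min_def by fastforce
qed

lemma pa2_step_loss_bound:
  fixes s :: "'a::euclidean_space \<times> (nat \<Rightarrow> real)"
  assumes C: "0 < C" and lab: "1 \<le> yl" "yl \<le> yr" "yr \<le> K"
    and ideal_l: "\<forall>i\<in>{1..yl - 1}. u \<bullet> x - b i \<ge> 1"
    and ideal_r: "\<forall>i\<in>{yr..K - 1}. u \<bullet> x - b i \<le> -1"
    and M: "1 + 1 / (2 * C) + real (card (Iset K yl yr)) * (norm x)\<^sup>2 \<le> M"
  shows "(\<Sum>i=1..K - 1. (pa_loss K x yl yr (fst s) (snd s) i)\<^sup>2)
    \<le> M * (pa_sqdist K u b (fst s) (snd s)
           - pa_sqdist K u b (fst (pa2_step C K x yl yr s)) (snd (pa2_step C K x yl yr s)))"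
proof -
  obtain w0 \<theta>0 where s: "s = (w0, \<theta>0)" by fastforce
  obtain w \<theta> \<xi> where strong: "pa2_strong_min C K x yl yr w0 \<theta>0 w \<theta> \<xi>"
    using pa2_strong_min_exists[OF C lab] by blast
  define obj where "obj = pa2_obj C K yl yr w0 \<theta>0 w \<theta> \<xi>"
  define b' where "b' i = (if i \<in> {1..K - 1} then b i else 0)" for i
  have "pa2_feasible K x yl yr u b' (\<lambda>_. 0)"
    using lab ideal_l ideal_r by (auto simp: pa2_feasible_def b'_def)
  moreover have "pa_sqdist K u b' = pa_sqdist K u b"
    by (intro ext) (simp add: pa_sqdist_def b'_def)
  ultimately have progress: "2 * obj \<le> pa_sqdist K u b w0 \<theta>0 - pa_sqdist K u b w \<theta>"
    using pa2_strong_min_progress[OF C strong, of u b'] by (simp add: obj_def)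
  have "pa2_feasible K x yl yr w \<theta> \<xi>" using strong by (simp add: pa2_strong_min_def)
  then have "(\<Sum>i=1..K - 1. (pa_loss K x yl yr w0 \<theta>0 i)\<^sup>2)
      \<le> (1 + 1 / (2 * C) + real (card (Iset K yl yr)) * (norm x)\<^sup>2) * (2 * obj)"
    unfolding obj_def by (rule pa_loss_sq_sum_le_obj[OF C lab])
  also have "\<dots> \<le> M * (2 * obj)"
    using M pa2_obj_nonneg[OF C] by (intro mult_right_mono) (auto simp: obj_def)
  also have "\<dots> \<le> M * (pa_sqdist K u b w0 \<theta>0 - pa_sqdist K u b w \<theta>)"
    using progress M C by (intro mult_left_mono) (auto intro: order_trans[rotated])
  finally show ?thesis
    using pa2_step_eq_strong_min[OF C strong] by (simp add: s)
qed

theorem corollary3: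
  fixes C :: real and K T :: nat
    and x :: "nat \<Rightarrow> 'a::euclidean_space" and yl yr :: "nat \<Rightarrow> nat"
    and u :: 'a and b :: "nat \<Rightarrow> real"
  assumes "C > 0" and "T \<ge> 1"
    and labels: "\<forall>t\<in>{1..T}. 1 \<le> yl t \<and> yl t \<le> yr t \<and> yr t \<le> K"
    and ideal_l: "\<forall>t\<in>{1..T}. \<forall>i\<in>{1..yl t - 1}. u \<bullet> x t - b i \<ge> 1"
    and ideal_r: "\<forall>t\<in>{1..T}. \<forall>i\<in>{yr t..K - 1}. u \<bullet> x t - b i \<le> -1"
  shows "(\<Sum>t=1..T. \<Sum>i=1..K - 1.
            (pa_loss K (x t) (yl t) (yr t)
               (fst (pa2_state C K x yl yr (t - 1))) (snd (pa2_state C K x yl yr (t - 1))) i)\<^sup>2)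
         \<le> (1 + 1 / (2 * C)
              + (Max ((\<lambda>t. (norm (x t))\<^sup>2) ` {1..T}))
                * (real K - real (Min ((\<lambda>t. yr t - yl t) ` {1..T})) - 1))
           * ((norm u)\<^sup>2 + (\<Sum>i=1..K - 1. (b i)\<^sup>2))"
proof -
  define v where "v = pa2_state C K x yl yr"
  define L where "L t = (\<Sum>i=1..K - 1.
    (pa_loss K (x t) (yl t) (yr t) (fst (v (t - 1))) (snd (v (t - 1))) i)\<^sup>2)" for t
  define M where "M = 1 + 1 / (2 * C) + Max ((\<lambda>t. (norm (x t))\<^sup>2) ` {1..T})
      * (real K - real (Min ((\<lambda>t. yr t - yl t) ` {1..T})) - 1)"
  define D where "D t = pa_sqdist K u b (fst (v t)) (snd (v t))" for t
  have M_ge: "1 + 1 / (2 * C) + real (card (Iset K (yl t) (yr t))) * (norm (x t))\<^sup>2 \<le> M"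
    if "t \<in> {1..T}" for t
    using card_Iset_mult_sq_norm_le[of "{1..T}" t yl yr K x] labels that by (simp add: M_def)
  have "L t \<le> M * (D (t - 1) - D t)" if t: "t \<in> {1..T}" for t
  proof -
    have "v t = pa2_step C K (x t) (yl t) (yr t) (v (t - 1))"
      using t by (cases t) (auto simp: v_def)
    then show ?thesis
      using pa2_step_loss_bound[OF \<open>C > 0\<close> _ _ _ _ _ M_ge[OF t]] labels ideal_l ideal_r t
      by (simp add: L_def D_def)
  qed
  then have "(\<Sum>t=1..T. L t) \<le> (\<Sum>t=1..T. M * (D (t - 1) - D t))" by (rule sum_mono)
  also have "\<dots> = M * (D 0 - D T)"
    using sum_telescope''[of 0 T "\<lambda>t. - D t"] by (simp add: sum_distrib_left[symmetric])
  also have "\<dots> \<le> M * D 0"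
    using M_ge[of 1] \<open>T \<ge> 1\<close> \<open>C > 0\<close> pa_sqdist_nonneg[of K u b]
    by (intro mult_left_mono) (auto simp: D_def intro: order_trans[rotated])
  also have "D 0 = (norm u)\<^sup>2 + (\<Sum>i=1..K - 1. (b i)\<^sup>2)"
    by (simp add: D_def v_def pa_sqdist_def)
  finally show ?thesis unfolding L_def M_def v_def .
qed

end
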